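(* Let $q\ge 3$ be odd and $n\ge 1$. There exists an ordering of all words of $\mathbb{Z}_q^{n}$ in which consecutive words have Lee distance $1$, beginning with $(0,0,\ldots,0)$ and ending with $(1,1,\ldots,1)$.
   Context: Lee distance between $v,u\in\mathbb{Z}_q^{n}$ is $\sum_{i}\min\{|v_i-u_i|,q-|v_i-u_i|\}$, entries regarded as integers in $\{0,\ldots,q-1\}$. *)

theory Defs
  imports Main
begin

definition words :: "nat \<Rightarrow> nat \<Rightarrow> nat list set" where
  "words q n = {v. length v = n \<and> (\<forall>x\<in>set v. x < q)}"

text \<open>Lee weight of a coordinate difference, entries regarded as integers in {0..q-1}.\<close>
definition lee_coord :: "nat \<Rightarrow> nat \<Rightarrow> nat \<Rightarrow> nat" where
  "lee_coord q a b = min (nat \<bar>int a - int b\<bar>) (q - nat \<bar>int a - int b\<bar>)"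

definition lee_dist :: "nat \<Rightarrow> nat list \<Rightarrow> nat list \<Rightarrow> nat" where
  "lee_dist q v u = (\<Sum>i<length v. lee_coord q (v ! i) (u ! i))"

end

theory Submission
  imports Defs
begin

text \<open>
  A reflected (boustrophedon) Gray code.  Let the first coordinate run through
  0, q-1, q-2, ..., 1, which is a Lee path in Z_q because 0 and q-1 are Lee neighbours.
  For each value of the first coordinate, traverse a Gray code of Z_q^(n-1),
  alternately forwards and backwards, so that consecutive blocks are joined by a
  change of the first coordinate only.  As q is odd there are an odd number of
  blocks, so the last block runs forwards and ends in 1 followed by the last word
  (1,...,1) of the inner code.
\<close>

definition lee_adjacent :: "nat \<Rightarrow> nat list \<Rightarrow> nat list \<Rightarrow> bool" where
  "lee_adjacent q u v \<longleftrightarrow> length u = length v \<and> lee_dist q u v = 1"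

lemma lee_dist_Cons: "lee_dist q (x # v) (y # u) = lee_coord q x y + lee_dist q v u"
  unfolding lee_dist_def by (simp only: length_Cons sum.lessThan_Suc_shift nth_Cons_0 nth_Cons_Suc)

lemma lee_coord_self [simp]: "lee_coord q a a = 0"
  unfolding lee_coord_def by simp

lemma lee_dist_self [simp]: "lee_dist q u u = 0"
  unfolding lee_dist_def by simp

lemma lee_coord_commute: "lee_coord q a b = lee_coord q b a"
  unfolding lee_coord_def by (simp add: abs_minus_commute)

lemma lee_adjacent_commute: "lee_adjacent q u v \<longleftrightarrow> lee_adjacent q v u"
  unfolding lee_adjacent_def lee_dist_def by (auto simp: lee_coord_commute)

lemma lee_adjacent_Cons_same [simp]: "lee_adjacent q (x # u) (x # v) \<longleftrightarrow> lee_adjacent q u v"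
  unfolding lee_adjacent_def by (simp add: lee_dist_Cons)

lemma lee_adjacent_Cons_Cons_self: "lee_adjacent q (x # u) (y # u) \<longleftrightarrow> lee_coord q x y = 1"
  unfolding lee_adjacent_def by (simp add: lee_dist_Cons)

fun snake :: "'a list \<Rightarrow> 'a list list \<Rightarrow> 'a list list" where
  "snake [] P = []"
| "snake (c # cs) P = map (Cons c) P @ snake cs (rev P)"

lemma set_snake: "set (snake cs P) = {c # w | c w. c \<in> set cs \<and> w \<in> set P}"
  by (induction cs arbitrary: P) auto

lemma distinct_snake: "distinct cs \<Longrightarrow> distinct P \<Longrightarrow> distinct (snake cs P)"
  by (induction cs arbitrary: P) (auto simp: distinct_map set_snake)

lemma snake_Nil_right [simp]: "snake cs [] = []"
  by (induction cs) auto

lemma snake_eq_Nil_iff: "snake cs P = [] \<longleftrightarrow> cs = [] \<or> P = []"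
  by (induction cs arbitrary: P) auto

lemma hd_snake: "cs \<noteq> [] \<Longrightarrow> P \<noteq> [] \<Longrightarrow> hd (snake cs P) = hd cs # hd P"
  by (cases cs) (auto simp: hd_map)

lemma last_snake:
  "cs \<noteq> [] \<Longrightarrow> P \<noteq> [] \<Longrightarrow>
     last (snake cs P) = last cs # (if odd (length cs) then last P else hd P)"
proof (induction cs arbitrary: P)
  case (Cons c cs)
  then show ?case
    by (cases "cs = []") (auto simp: last_map snake_eq_Nil_iff last_rev hd_rev)
qed simp

lemma successively_snake:
  assumes "successively (\<lambda>a b. lee_coord q a b = 1) cs" and "successively (lee_adjacent q) P"
  shows "successively (lee_adjacent q) (snake cs P)"
  using assms
proof (induction cs arbitrary: P)
  case (Cons c cs)
  show ?case
  proof (cases "cs = [] \<or> P = []")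
    case True
    with Cons.prems show ?thesis by (auto simp: successively_map)
  next
    case False
    then have "lee_coord q c (hd cs) = 1"
      using Cons.prems(1) by (cases cs) auto
    then have "lee_adjacent q (last (map (Cons c) P)) (hd (snake cs (rev P)))"
      using False by (simp add: last_map hd_snake hd_rev lee_adjacent_Cons_Cons_self)
    moreover have "successively (lee_adjacent q) (snake cs (rev P))"
      using Cons by (auto simp: successively_Cons lee_adjacent_commute)
    ultimately show ?thesis
      using Cons.prems(2) False by (simp add: successively_append_iff successively_map)
  qed
qed simp

definition lee_cycle :: "nat \<Rightarrow> nat list" where
  "lee_cycle q = 0 # rev [1..<q]"

lemma set_lee_cycle: "set (lee_cycle q) = {..<q}" if "q \<ge> 1"
  using that by (auto simp: lee_cycle_def)

lemma distinct_lee_cycle: "distinct (lee_cycle q)"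
  by (simp add: lee_cycle_def)

lemma last_lee_cycle: "last (lee_cycle q) = 1" if "q \<ge> 2"
  using that by (simp add: lee_cycle_def last_rev)

lemma successively_lee_cycle:
  assumes "q \<ge> 2"
  shows "successively (\<lambda>a b. lee_coord q a b = 1) (lee_cycle q)"
proof -
  have "successively (\<lambda>a b. lee_coord q b a = 1) [1..<q]"
    by (rule successively_conv_nth[THEN iffD2]) (auto simp: lee_coord_def)
  moreover have "lee_coord q 0 (q - 1) = 1"
    using assms by (simp add: lee_coord_def)
  ultimately show ?thesis
    using assms by (simp add: lee_cycle_def successively_Cons hd_rev)
qed

fun lee_gray :: "nat \<Rightarrow> nat \<Rightarrow> nat list list" where
  "lee_gray q 0 = [[]]"
| "lee_gray q (Suc n) = snake (lee_cycle q) (lee_gray q n)"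

lemma words_Suc: "words q (Suc n) = {x # w | x w. x < q \<and> w \<in> words q n}"
  unfolding words_def by (auto simp: length_Suc_conv)

lemma lee_gray_code:
  assumes "q \<ge> 2" and "odd q"
  shows "distinct (lee_gray q n) \<and> set (lee_gray q n) = words q n
    \<and> successively (lee_adjacent q) (lee_gray q n) \<and> lee_gray q n \<noteq> []
    \<and> hd (lee_gray q n) = replicate n 0 \<and> last (lee_gray q n) = replicate n 1"
proof (induction n)
  case 0
  show ?case by (auto simp: words_def)
next
  case (Suc n)
  have "lee_cycle q \<noteq> []" "hd (lee_cycle q) = 0" "odd (length (lee_cycle q))"
    using assms by (auto simp: lee_cycle_def)
  with Suc assms set_lee_cycle distinct_lee_cycle successively_lee_cycle last_lee_cycle
  show ?case
    by (simp add: distinct_snake set_snake words_Suc successively_snake snake_eq_Nil_iff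
        hd_snake last_snake)
qed

theorem lemma4:
  fixes q n :: nat
  assumes "q \<ge> 3" and "odd q" and "n \<ge> 1"
  shows "\<exists>ws :: nat list list.
           distinct ws \<and> set ws = words q n \<and>
           (\<forall>i. Suc i < length ws \<longrightarrow> lee_dist q (ws ! i) (ws ! Suc i) = 1) \<and>
           hd ws = replicate n 0 \<and> last ws = replicate n 1"
proof -
  have code: "distinct (lee_gray q n) \<and> set (lee_gray q n) = words q n
    \<and> successively (lee_adjacent q) (lee_gray q n)
    \<and> hd (lee_gray q n) = replicate n 0 \<and> last (lee_gray q n) = replicate n 1"
    using lee_gray_code[of q n] assms by simp
  then have "\<forall>i. Suc i < length (lee_gray q n) \<longrightarrow>
      lee_dist q (lee_gray q n ! i) (lee_gray q n ! Suc i) = 1"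
    by (auto dest: successively_nth simp: lee_adjacent_def)
  with code show ?thesis
    by blast
qed

end
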